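(* Let $\varrho=\rho_1\otimes\cdots\otimes\rho_n$ be a product state on $\mathcal K=\bigotimes_{i=1}^n\mathcal H_i$ (finite-dimensional Hilbert spaces). For $1\le i\ne j\le n$ let $X_{ij}=X_{ji}$ be an observable on $\mathcal K$ acting nontrivially only on the $i$th and $j$th tensor components. Define $X_i=\sum_{j\ne i}X_{ij}$ and $X=\sum_{i\ne j}X_{ij}=\sum_iX_i$. Then $$\mathrm{Var}_\varrho[X]\le4\sum_{i=1}^n\mathbb E_\varrho[(\mathcal D_iX_i)^2]=4\sum_{i=1}^n\mathbb E_\varrho[X_i^2]-4\sum_{i=1}^n\mathbb E_{\varrho\otimes\varrho}\big[(X_i\otimes I)F_i(X_i\otimes I)F_i\big].$$
   Context: $\mathbb E_\tau[Y]=\mathrm{Tr}[\tau Y]$, $\mathrm{Var}_\varrho[X]=\mathbb E_\varrho[X^2]-\mathbb E_\varrho[X]^2$. For $i\in[n]$, $\mathcal E_iY=\mathrm{Tr}_i[(\rho_i\otimes I)Y]$, regarded as an operator on $\mathcal K$ by tensoring with the identity on $\mathcal H_i$, and $\mathcal D_iY=Y-\mathcal E_iY$. $F_i$ is the swap operator on $\mathcal K\otimes\mathcal K$ exchanging the $i$th tensor component of the first copy with the $i$th tensor component of the second copy. "Acting nontrivially only on components $i,j$" means the operator has the form $Y\otimes I$ with $Y$ acting on $\mathcal H_i\otimes\mathcal H_j$ and $I$ the identity on the remaining factors. *)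

theory Defs
  imports Complex_Main "HOL-Library.Complex_Order" "HOL-Library.FuncSet"
begin

(* Basis of K = H_0 (x) ... (x) H_(n-1), dim H_i = d i: tuples x with x i < d i for i < n. *)
type_synonym idx = "nat \<Rightarrow> nat"
(* Operators on K, as matrices indexed by basis tuples (only entries on the basis matter). *)
type_synonym op = "idx \<Rightarrow> idx \<Rightarrow> complex"
(* Operators on K (x) K, indexed by pairs of basis tuples. *)
type_synonym op2 = "idx \<times> idx \<Rightarrow> idx \<times> idx \<Rightarrow> complex"

definition basis :: "nat \<Rightarrow> (nat \<Rightarrow> nat) \<Rightarrow> idx set" where
  "basis n d = PiE {..<n} (\<lambda>i. {..<d i})"

definition mmul :: "nat \<Rightarrow> (nat \<Rightarrow> nat) \<Rightarrow> op \<Rightarrow> op \<Rightarrow> op" where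
  "mmul n d A C = (\<lambda>x y. \<Sum>z\<in>basis n d. A x z * C z y)"

definition tr :: "nat \<Rightarrow> (nat \<Rightarrow> nat) \<Rightarrow> op \<Rightarrow> complex" where
  "tr n d A = (\<Sum>x\<in>basis n d. A x x)"

definition expect :: "nat \<Rightarrow> (nat \<Rightarrow> nat) \<Rightarrow> op \<Rightarrow> op \<Rightarrow> complex" where
  "expect n d \<tau> Y = tr n d (mmul n d \<tau> Y)"

definition var :: "nat \<Rightarrow> (nat \<Rightarrow> nat) \<Rightarrow> op \<Rightarrow> op \<Rightarrow> complex" where
  "var n d \<tau> X = expect n d \<tau> (mmul n d X X) - (expect n d \<tau> X)^2"

definition density_matrix :: "nat \<Rightarrow> (nat \<Rightarrow> nat \<Rightarrow> complex) \<Rightarrow> bool" where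
  "density_matrix m r \<longleftrightarrow>
     (\<forall>a<m. \<forall>b<m. r a b = cnj (r b a)) \<and>
     (\<forall>v :: nat \<Rightarrow> complex. (\<Sum>a<m. \<Sum>b<m. cnj (v a) * r a b * v b) \<ge> 0) \<and>
     (\<Sum>a<m. r a a) = 1"

definition product_state :: "nat \<Rightarrow> (nat \<Rightarrow> nat \<Rightarrow> nat \<Rightarrow> complex) \<Rightarrow> op" where
  "product_state n \<rho> = (\<lambda>x y. \<Prod>i<n. \<rho> i (x i) (y i))"

definition hermitian :: "nat \<Rightarrow> (nat \<Rightarrow> nat) \<Rightarrow> op \<Rightarrow> bool" where
  "hermitian n d X \<longleftrightarrow> (\<forall>x\<in>basis n d. \<forall>y\<in>basis n d. X x y = cnj (X y x))"

(* X = Y (x) I with Y acting on H_i (x) H_j *)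
definition local_on :: "nat \<Rightarrow> (nat \<Rightarrow> nat) \<Rightarrow> nat \<Rightarrow> nat \<Rightarrow> op \<Rightarrow> bool" where
  "local_on n d i j X \<longleftrightarrow>
     (\<exists>Y :: nat \<Rightarrow> nat \<Rightarrow> nat \<Rightarrow> nat \<Rightarrow> complex.
        \<forall>x\<in>basis n d. \<forall>y\<in>basis n d.
          X x y = (if (\<forall>k\<in>{..<n} - {i, j}. x k = y k) then Y (x i) (x j) (y i) (y j) else 0))"

(* E_i Y = Tr_i[(rho_i (x) I) Y], tensored with the identity on H_i *)
definition cond_exp :: "(nat \<Rightarrow> nat) \<Rightarrow> (nat \<Rightarrow> nat \<Rightarrow> nat \<Rightarrow> complex) \<Rightarrow> nat \<Rightarrow> op \<Rightarrow> op" where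
  "cond_exp d \<rho> i Y = (\<lambda>x y. if x i = y i
      then (\<Sum>a<d i. \<Sum>b<d i. \<rho> i a b * Y (x(i := b)) (y(i := a))) else 0)"

definition cond_dev :: "(nat \<Rightarrow> nat) \<Rightarrow> (nat \<Rightarrow> nat \<Rightarrow> nat \<Rightarrow> complex) \<Rightarrow> nat \<Rightarrow> op \<Rightarrow> op" where
  "cond_dev d \<rho> i Y = (\<lambda>x y. Y x y - cond_exp d \<rho> i Y x y)"

definition mmul2 :: "nat \<Rightarrow> (nat \<Rightarrow> nat) \<Rightarrow> op2 \<Rightarrow> op2 \<Rightarrow> op2" where
  "mmul2 n d A C = (\<lambda>x y. \<Sum>z\<in>basis n d \<times> basis n d. A x z * C z y)"

definition tr2 :: "nat \<Rightarrow> (nat \<Rightarrow> nat) \<Rightarrow> op2 \<Rightarrow> complex" where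
  "tr2 n d A = (\<Sum>x\<in>basis n d \<times> basis n d. A x x)"

definition expect2 :: "nat \<Rightarrow> (nat \<Rightarrow> nat) \<Rightarrow> op2 \<Rightarrow> op2 \<Rightarrow> complex" where
  "expect2 n d \<tau> Y = tr2 n d (mmul2 n d \<tau> Y)"

definition tensor :: "op \<Rightarrow> op \<Rightarrow> op2" where
  "tensor \<tau> \<sigma> = (\<lambda>(x, x') (y, y'). \<tau> x y * \<sigma> x' y')"

definition ext_id :: "op \<Rightarrow> op2" where
  "ext_id A = (\<lambda>(x, x') (y, y'). A x y * (if x' = y' then 1 else 0))"

(* F_i : swap of the i-th tensor components of the two copies *)
definition swap_op :: "nat \<Rightarrow> op2" where
  "swap_op i = (\<lambda>(x, x') (y, y'). if y = x(i := x' i) \<and> y' = x'(i := x i) then 1 else 0)"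

end

(*
  Let P_k = E_0 ... E_(k-1).  Every E_i fixes P_n X, so P_n X is the
  scalar E[X], and X - E[X] telescopes into Delta_k = P_k (D_k X).  Since E_k Delta_k = 0 while E_k fixes
  Delta_l for l > k, the Delta_k are orthogonal for (A, B) |-> E[A B]; and E[(E_k A)^2] =
  E[A^2] - E[(D_k A)^2] <= E[A^2], the last step because E[B^2] >= 0 once each rho_i is written as a
  Gram matrix.  Hence Var[X] = sum_k E[Delta_k^2] <= sum_k E[(D_k X)^2].

  Since X_ij acts only on the components i and j, E_k fixes it unless k is i or j, so D_k X = 2 D_k X_k,
  which gives the factor 4.  Finally E[(D_i X_i)^2] = E[X_i^2] - E[(E_i X_i)^2], and conjugation by the
  swap F_i moves the i-th leg of X_i to the second copy, where tracing against rho_i produces E_i: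
  that is the identity E[(E_i X_i)^2] = E_(rho (x) rho)[(X_i (x) I) F_i (X_i (x) I) F_i].
*)

theory Submission
  imports Defs
begin

section \<open>Gram decomposition of positive semidefinite matrices\<close>

definition quad_form :: "nat \<Rightarrow> (nat \<Rightarrow> nat \<Rightarrow> complex) \<Rightarrow> (nat \<Rightarrow> complex) \<Rightarrow> complex" where
  "quad_form m r v = (\<Sum>a<m. \<Sum>b<m. cnj (v a) * r a b * v b)"

definition hermitian_mat :: "nat \<Rightarrow> (nat \<Rightarrow> nat \<Rightarrow> complex) \<Rightarrow> bool" where
  "hermitian_mat m r \<longleftrightarrow> (\<forall>a<m. \<forall>b<m. r a b = cnj (r b a))"

definition psd_mat :: "nat \<Rightarrow> (nat \<Rightarrow> nat \<Rightarrow> complex) \<Rightarrow> bool" where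
  "psd_mat m r \<longleftrightarrow> hermitian_mat m r \<and> (\<forall>v. 0 \<le> quad_form m r v)"

lemma density_matrix_psd: "density_matrix m r \<Longrightarrow> psd_mat m r"
  unfolding density_matrix_def psd_mat_def hermitian_mat_def quad_form_def by blast

lemma quad_form_Suc:
  "quad_form (Suc m) r v = quad_form m r v + (\<Sum>a<m. cnj (v a) * r a m) * v m
     + cnj (v m) * (\<Sum>b<m. r m b * v b) + cnj (v m) * r m m * v m"
  by (simp add: quad_form_def sum.distrib sum_distrib_left sum_distrib_right mult.assoc)

lemma quad_form_unit:
  "a < m \<Longrightarrow> quad_form m r (\<lambda>j. if j = a then 1 else 0) = r a a"
  by (simp add: quad_form_def if_distrib[where f=cnj] sum.delta sum.delta'
      if_distrib[where f="\<lambda>x. x * _"] if_distrib[where f="\<lambda>x. _ * x"] cong: if_cong)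

lemma quad_form_two_units:
  assumes "a < m" "b < m" "a \<noteq> b"
  shows "quad_form m r (\<lambda>j. (if j = b then 1 else 0) + (if j = a then s else 0))
    = r b b + cnj s * r a b + s * r b a + cnj s * s * r a a"
  using assms by (simp add: quad_form_def sum.distrib distrib_left distrib_right if_distrib[where f=cnj]
      sum.delta sum.delta' if_distrib[where f="\<lambda>x. x * _"] if_distrib[where f="\<lambda>x. _ * x"] cong: if_cong)

lemma psd_diag_real_nonneg:
  assumes "psd_mat m r" "a < m"
  shows "\<exists>p\<ge>0. r a a = complex_of_real p"
proof -
  have "0 \<le> r a a"
    using assms(1) quad_form_unit[OF assms(2), of r] unfolding psd_mat_def by metis
  then show ?thesis
    by (intro exI[of _ "Re (r a a)"]) (auto simp: less_eq_complex_def complex_eq_iff)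
qed

lemma cnj_mult_self: "cnj s * s = complex_of_real ((cmod s)\<^sup>2)"
  by (metis complex_norm_square mult.commute)

lemma cnj_mult_self_nonneg: "0 \<le> cnj (s::complex) * s"
  unfolding cnj_mult_self by (simp add: less_eq_complex_def)

lemma psd_zero_diag_imp_zero:
  assumes psd: "psd_mat m r" and a: "a < m" and b: "b < m" and zero: "r b b = 0"
  shows "r a b = 0"
proof (cases "a = b")
  case True
  with zero show ?thesis by simp
next
  case False
  obtain q where q0: "q \<ge> 0" and rq: "r a a = complex_of_real q"
    using psd_diag_real_nonneg[OF psd a] by blast
  define c where "c = r a b"
  define t :: real where "t = 1 / (q + 1)"
  have t0: "t > 0" using q0 by (simp add: t_def)
  have tq: "t * q < 1" using q0 by (simp add: t_def field_simps)
  have rba: "r b a = cnj c" using psd a b unfolding psd_mat_def hermitian_mat_def c_def by blast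
  \<comment> \<open>test the form on \<open>e\<^sub>b - t c e\<^sub>a\<close>, which makes it \<open>|c|\<^sup>2 (t\<^sup>2 q - 2t) < 0\<close> unless \<open>c = 0\<close>\<close>
  define s where "s = - complex_of_real t * c"
  have "0 \<le> r b b + cnj s * r a b + s * r b a + cnj s * s * r a a"
    using psd unfolding psd_mat_def quad_form_two_units[OF a b False, symmetric] by blast
  also have "\<dots> = cnj c * c * complex_of_real (t * t * q - 2 * t)"
    unfolding zero rba rq s_def c_def[symmetric] by (simp add: algebra_simps)
  also have "\<dots> = complex_of_real ((cmod c)\<^sup>2 * (t * t * q - 2 * t))"
    by (simp only: cnj_mult_self of_real_mult)
  finally have "0 \<le> (cmod c)\<^sup>2 * (t * t * q - 2 * t)"
    by (simp add: less_eq_complex_def)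
  moreover have "t * t * q - 2 * t < 0"
    using mult_strict_left_mono[OF tq t0] t0 by (simp add: algebra_simps)
  ultimately have "(cmod c)\<^sup>2 \<le> 0"
    by (auto simp add: zero_le_mult_iff)
  then show ?thesis by (simp add: c_def)
qed

lemma quad_form_upd_out: "quad_form m r (v(m := x)) = quad_form m r v"
  by (simp add: quad_form_def)

lemma psd_mat_restrict:
  assumes "psd_mat (Suc m) r"
  shows "psd_mat m r"
  unfolding psd_mat_def
proof (intro conjI allI)
  show "hermitian_mat m r"
    using assms unfolding psd_mat_def hermitian_mat_def by (meson less_SucI)
  fix v :: "nat \<Rightarrow> complex"
  have "0 \<le> quad_form (Suc m) r (v(m := 0))"
    using assms unfolding psd_mat_def by blast
  also have "quad_form (Suc m) r (v(m := 0)) = quad_form m r v"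
    unfolding quad_form_Suc quad_form_upd_out by simp
  finally show "0 \<le> quad_form m r v" .
qed

lemma schur_complement_psd_pos:
  assumes psd: "psd_mat (Suc m) r" and p: "r m m = complex_of_real p" "p > 0"
  shows "psd_mat m (\<lambda>a b. r a b - r a m * r m b / complex_of_real p)" (is "psd_mat m ?r'")
  unfolding psd_mat_def
proof (intro conjI allI)
  have herm: "r a b = cnj (r b a)" if "a < Suc m" "b < Suc m" for a b
    using psd that unfolding psd_mat_def hermitian_mat_def by blast
  show "hermitian_mat m ?r'"
    unfolding hermitian_mat_def
  proof (intro allI impI)
    fix a b assume "a < m" "b < m"
    then have "r a b = cnj (r b a)" "r a m = cnj (r m a)" "r m b = cnj (r b m)"
      by (auto intro: herm)
    then show "?r' a b = cnj (?r' b a)" by (simp add: mult.commute)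
  qed
  fix v :: "nat \<Rightarrow> complex"
  define c where "c = (\<Sum>b<m. r m b * v b)"
  have row: "(\<Sum>a<m. cnj (v a) * r a m) = cnj c"
  proof -
    have "cnj (v a) * r a m = cnj (r m a * v a)" if "a < m" for a
      using herm[of a m] that by simp
    then show ?thesis unfolding c_def cnj_sum by (intro sum.cong) auto
  qed
  \<comment> \<open>completing the square: choose the last coordinate so that the cross terms cancel\<close>
  have "0 \<le> quad_form (Suc m) r (v(m := - c / complex_of_real p))"
    using psd unfolding psd_mat_def by blast
  also have "\<dots> = quad_form m r v + cnj c * (- c / complex_of_real p)
      + cnj (- c / complex_of_real p) * c
      + cnj (- c / complex_of_real p) * complex_of_real p * (- c / complex_of_real p)"
    unfolding quad_form_Suc quad_form_upd_out by (simp add: row c_def[symmetric] p)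
  also have "\<dots> = quad_form m r v - cnj c * c / complex_of_real p"
    using p by (simp add: field_simps)
  also have "\<dots> = quad_form m ?r' v"
  proof -
    have "quad_form m ?r' v = quad_form m r v
        - (\<Sum>a<m. \<Sum>b<m. (cnj (v a) * r a m) * (r m b * v b)) / complex_of_real p"
      unfolding quad_form_def by (simp add: sum_subtractf sum_divide_distrib algebra_simps)
    also have "(\<Sum>a<m. \<Sum>b<m. (cnj (v a) * r a m) * (r m b * v b)) = cnj c * c"
      by (simp add: sum_product[symmetric] row c_def[symmetric])
    finally show ?thesis by simp
  qed
  finally show "0 \<le> quad_form m ?r' v" .
qed

text \<open>For \<open>r m m = 0\<close> the division by zero makes the Schur complement just the restriction of \<open>r\<close>.\<close>

lemma schur_complement_psd:
  assumes psd: "psd_mat (Suc m) r" and p: "r m m = complex_of_real p"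
  shows "psd_mat m (\<lambda>a b. r a b - r a m * r m b / complex_of_real p)"
proof (cases "p = 0")
  case True
  then show ?thesis using psd_mat_restrict[OF psd] by simp
next
  case False
  obtain q where "q \<ge> 0" "r m m = complex_of_real q"
    using psd_diag_real_nonneg[OF psd lessI] by blast
  with p False have "p > 0" by simp
  then show ?thesis using schur_complement_psd_pos[OF psd p] by blast
qed

lemma psd_last_entry:
  assumes psd: "psd_mat (Suc m) r" and p: "r m m = complex_of_real p"
    and ab: "a < Suc m" "b < Suc m" "a = m \<or> b = m"
  shows "r a m * r m b / complex_of_real p = r a b"
proof (cases "p = 0")
  case True
  have "r a m = 0" "r b m = 0"
    using psd_zero_diag_imp_zero[OF psd _ lessI] ab p True by simp_all
  moreover have "r m b = cnj (r b m)"
    using psd ab unfolding psd_mat_def hermitian_mat_def by blast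
  ultimately show ?thesis using ab by auto
next
  case False
  then show ?thesis using ab p by auto
qed

theorem psd_gram_decomposition:
  assumes "psd_mat m r"
  shows "\<exists>w. \<forall>a<m. \<forall>b<m. r a b = (\<Sum>k<m. w k a * cnj (w k b))"
  using assms
proof (induction m arbitrary: r)
  case 0
  then show ?case by simp
next
  case (Suc m)
  have herm: "r a b = cnj (r b a)" if "a < Suc m" "b < Suc m" for a b
    using Suc.prems that unfolding psd_mat_def hermitian_mat_def by blast
  obtain p where p: "p \<ge> 0" "r m m = complex_of_real p"
    using psd_diag_real_nonneg[OF Suc.prems lessI] by blast
  define r' where "r' = (\<lambda>a b. r a b - r a m * r m b / complex_of_real p)"
  obtain w' where w': "\<forall>a<m. \<forall>b<m. r' a b = (\<Sum>k<m. w' k a * cnj (w' k b))"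
    using Suc.IH[OF schur_complement_psd[OF Suc.prems p(2)]] unfolding r'_def by blast
  define w where "w = (\<lambda>k a. if k = m then r a m / complex_of_real (sqrt p)
    else if a < m then w' k a else 0)"
  show ?case
  proof (intro exI allI impI)
    fix a b assume a: "a < Suc m" and b: "b < Suc m"
    have "w m a * cnj (w m b) = r a m * cnj (r b m) / (complex_of_real (sqrt p) * complex_of_real (sqrt p))"
      by (simp add: w_def)
    also have "\<dots> = r a m * r m b / complex_of_real p"
      using herm[OF lessI b] p(1) by (simp flip: of_real_mult)
    finally have "(\<Sum>k<Suc m. w k a * cnj (w k b))
        = (if a < m \<and> b < m then r' a b else 0) + r a m * r m b / complex_of_real p"
      using w' by (auto simp: w_def)
    also have "\<dots> = r a b"
      using psd_last_entry[OF Suc.prems p(2) a b] a b by (auto simp: r'_def)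
    finally show "r a b = (\<Sum>k<Suc m. w k a * cnj (w k b))" ..
  qed
qed

section \<open>Conditional expectations on a product state\<close>

lemma if_zero_mult: "(if P then a else 0) * b = (if P then a * b else (0::'a::mult_zero))"
  by simp

lemma mult_if_zero: "b * (if P then a else 0) = (if P then b * a else (0::'a::mult_zero))"
  by simp

lemma sum_swap_pairs:
  "(\<Sum>x\<in>A. \<Sum>y\<in>A. \<Sum>z\<in>A. \<Sum>k\<in>A. f x y z k) = (\<Sum>z\<in>A. \<Sum>k\<in>A. \<Sum>x\<in>A. \<Sum>y\<in>A. f x y z k)"
proof -
  have "(\<Sum>x\<in>A. \<Sum>y\<in>A. \<Sum>z\<in>A. \<Sum>k\<in>A. f x y z k) = (\<Sum>x\<in>A. \<Sum>z\<in>A. \<Sum>y\<in>A. \<Sum>k\<in>A. f x y z k)"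
    by (rule sum.cong[OF refl], rule sum.swap)
  also have "\<dots> = (\<Sum>x\<in>A. \<Sum>z\<in>A. \<Sum>k\<in>A. \<Sum>y\<in>A. f x y z k)"
    by (rule sum.cong[OF refl], rule sum.cong[OF refl], rule sum.swap)
  also have "\<dots> = (\<Sum>z\<in>A. \<Sum>x\<in>A. \<Sum>k\<in>A. \<Sum>y\<in>A. f x y z k)"
    by (rule sum.swap)
  also have "\<dots> = (\<Sum>z\<in>A. \<Sum>k\<in>A. \<Sum>x\<in>A. \<Sum>y\<in>A. f x y z k)"
    by (rule sum.cong[OF refl], rule sum.swap)
  finally show ?thesis .
qed

locale product_state_space =
  fixes n :: nat and d :: "nat \<Rightarrow> nat" and \<rho> :: "nat \<Rightarrow> nat \<Rightarrow> nat \<Rightarrow> complex"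
  assumes dims: "\<forall>i<n. d i \<ge> 1"
    and states: "\<forall>i<n. density_matrix (d i) (\<rho> i)"
begin

abbreviation "S \<equiv> basis n d"
abbreviation "R \<equiv> product_state n \<rho>"
abbreviation "\<E> \<equiv> cond_exp d \<rho>"
abbreviation "\<D> \<equiv> cond_dev d \<rho>"
abbreviation "E \<equiv> expect n d R"
abbreviation mul (infixl "\<cdot>" 70) where "A \<cdot> B \<equiv> mmul n d A B"

definition slice :: "nat \<Rightarrow> idx set" where
  "slice i = {x \<in> S. x i = 0}"

definition rho_except :: "nat \<Rightarrow> idx \<Rightarrow> idx \<Rightarrow> complex" where
  "rho_except i x y = (\<Prod>k\<in>{..<n}-{i}. \<rho> k (x k) (y k))"

text \<open>The entry of \<open>Tr\<^sub>i[(\<rho>\<^sub>i \<otimes> I) A]\<close>; it does not depend on the \<open>i\<close>th components of \<open>x\<close>, \<open>y\<close>.\<close>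
definition ptrace :: "nat \<Rightarrow> op \<Rightarrow> idx \<Rightarrow> idx \<Rightarrow> complex" where
  "ptrace i A x y = (\<Sum>a<d i. \<Sum>b<d i. \<rho> i a b * A (x(i:=b)) (y(i:=a)))"

lemma basis_iff: "x \<in> S \<longleftrightarrow> (\<forall>i<n. x i < d i) \<and> (\<forall>i. n \<le> i \<longrightarrow> x i = undefined)"
  by (auto simp: basis_def PiE_iff extensional_def)

lemma finite_basis[simp]: "finite S"
  by (simp add: basis_def finite_PiE)

lemma finite_slice[simp]: "finite (slice i)"
  by (simp add: slice_def)

lemma basis_upd: "x \<in> S \<Longrightarrow> i < n \<Longrightarrow> a < d i \<Longrightarrow> x(i:=a) \<in> S"
  by (auto simp: basis_iff)

lemma basis_lt: "x \<in> S \<Longrightarrow> i < n \<Longrightarrow> x i < d i"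
  by (auto simp: basis_iff)

lemma basis_eqI: "x \<in> S \<Longrightarrow> y \<in> S \<Longrightarrow> (\<forall>i<n. x i = y i) \<Longrightarrow> x = y"
  by (rule ext) (metis basis_iff not_le)

lemma trace_rho: "i < n \<Longrightarrow> (\<Sum>a<d i. \<rho> i a a) = 1"
  using states unfolding density_matrix_def by blast

lemma rho_hermitian: "i < n \<Longrightarrow> a < d i \<Longrightarrow> b < d i \<Longrightarrow> \<rho> i a b = cnj (\<rho> i b a)"
  using states unfolding density_matrix_def by blast

lemma sum_basis_slice:
  assumes i: "i < n"
  shows "(\<Sum>x\<in>S. f x) = (\<Sum>x\<in>slice i. \<Sum>a<d i. f (x(i:=a)))"
proof -
  have "(\<Sum>x\<in>slice i. \<Sum>a<d i. f (x(i:=a))) = (\<Sum>(x,a)\<in>slice i \<times> {..<d i}. f (x(i:=a)))"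
    by (simp add: sum.cartesian_product)
  also have "\<dots> = (\<Sum>x\<in>S. f x)"
    by (rule sum.reindex_bij_witness[of _ "\<lambda>x. (x(i:=0), x i)" "\<lambda>(x,a). x(i:=a)"])
       (use i dims in \<open>auto simp: slice_def basis_upd basis_lt Suc_le_eq\<close>)
  finally show ?thesis ..
qed

lemma sum_basis_slice2:
  assumes i: "i < n"
  shows "(\<Sum>x\<in>S. \<Sum>y\<in>S. F x y) =
    (\<Sum>x\<in>slice i. \<Sum>y\<in>slice i. \<Sum>p<d i. \<Sum>q<d i. F (x(i:=p)) (y(i:=q)))"
  by (simp only: sum_basis_slice[OF i] sum.swap[where A="{..<d i}" and B="slice i"])

lemma sum_basis_slice3:
  assumes i: "i < n"
  shows "(\<Sum>x\<in>S. \<Sum>y\<in>S. \<Sum>z\<in>S. F x y z) =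
    (\<Sum>x\<in>slice i. \<Sum>y\<in>slice i. \<Sum>z\<in>slice i. \<Sum>p<d i. \<Sum>q<d i. \<Sum>r<d i.
      F (x(i:=p)) (y(i:=q)) (z(i:=r)))"
  by (simp only: sum_basis_slice[OF i] sum.swap[where A="{..<d i}" and B="slice i"])

lemma rho_except_upd[simp]: "rho_except i (x(i:=p)) (y(i:=q)) = rho_except i x y"
  unfolding rho_except_def by (rule prod.cong) auto

lemma R_factor: "i < n \<Longrightarrow> R x y = \<rho> i (x i) (y i) * rho_except i x y"
  unfolding product_state_def rho_except_def by (simp add: prod.remove[of "{..<n}" i])

lemma R_upd: "i < n \<Longrightarrow> R (x(i:=p)) (y(i:=q)) = \<rho> i p q * rho_except i x y"
  by (simp add: R_factor[of i])

lemma trace_R: "(\<Sum>x\<in>S. R x x) = 1"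
proof -
  have "(\<Sum>x\<in>S. R x x) = (\<Prod>k<n. \<Sum>a<d k. \<rho> k a a)"
    unfolding product_state_def basis_def by (subst prod_sum_PiE) auto
  also have "\<dots> = 1" by (rule prod.neutral) (simp add: trace_rho)
  finally show ?thesis .
qed

lemma trace_rho_except: assumes i: "i < n" shows "(\<Sum>x\<in>slice i. rho_except i x x) = 1"
proof -
  have "1 = (\<Sum>x\<in>slice i. \<Sum>a<d i. R (x(i:=a)) (x(i:=a)))"
    using trace_R sum_basis_slice[OF i, of "\<lambda>x. R x x"] by simp
  also have "\<dots> = (\<Sum>x\<in>slice i. rho_except i x x * (\<Sum>a<d i. \<rho> i a a))"
    by (simp add: R_upd[OF i] sum_distrib_left mult.commute)
  finally show ?thesis by (simp add: trace_rho[OF i])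
qed

lemma cond_exp_eq: "\<E> i A x y = (if x i = y i then ptrace i A x y else 0)"
  by (simp add: cond_exp_def ptrace_def)

lemma cond_exp_upd: "\<E> i A (x(i:=p)) (y(i:=q)) = (if p = q then ptrace i A x y else 0)"
  by (simp add: cond_exp_def ptrace_def)

lemma cond_exp_diff: "\<E> i (\<lambda>x y. A x y - B x y) = (\<lambda>x y. \<E> i A x y - \<E> i B x y)"
  by (auto simp: cond_exp_def sum_subtractf algebra_simps intro!: ext)

lemma cond_exp_zero: "\<E> i (\<lambda>x y. 0) = (\<lambda>x y. 0)"
  by (auto simp: cond_exp_def intro!: ext)

lemma cond_exp_sum: "\<E> i (\<lambda>x y. \<Sum>k\<in>K. f k x y) = (\<lambda>x y. \<Sum>k\<in>K. \<E> i (f k) x y)"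
  by (auto simp: cond_exp_def sum_distrib_left sum.swap[of _ K] intro!: ext)

lemma cond_exp_idem: assumes i: "i < n" shows "\<E> i (\<E> i A) = \<E> i A"
proof (intro ext)
  fix x y
  have "\<E> i (\<E> i A) x y = (if x i = y i
      then (\<Sum>a<d i. \<Sum>b<d i. \<rho> i a b * (if b = a then ptrace i A x y else 0)) else 0)"
    unfolding cond_exp_def[of _ _ _ "\<E> i A"] by (simp add: cond_exp_upd)
  also have "\<dots> = \<E> i A x y"
    by (simp add: cond_exp_eq mult_if_zero trace_rho[OF i] sum_distrib_right[symmetric] cong: if_cong)
  finally show "\<E> i (\<E> i A) x y = \<E> i A x y" .
qed

lemma cond_exp_commute: assumes ij: "i \<noteq> j" shows "\<E> i (\<E> j A) = \<E> j (\<E> i A)"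
proof (intro ext)
  fix x y
  have "\<E> i (\<E> j A) x y = (if x i = y i \<and> x j = y j then
     (\<Sum>a<d i. \<Sum>b<d i. \<Sum>c<d j. \<Sum>e<d j. \<rho> i a b * (\<rho> j c e * A (x(i:=b, j:=e)) (y(i:=a, j:=c))))
     else 0)"
    using ij by (simp add: cond_exp_def sum_distrib_left)
  also have "\<dots> = (if x i = y i \<and> x j = y j then
     (\<Sum>c<d j. \<Sum>e<d j. \<Sum>a<d i. \<Sum>b<d i. \<rho> j c e * (\<rho> i a b * A (x(j:=e, i:=b)) (y(j:=c, i:=a))))
     else 0)"
  proof -
    have "(\<Sum>a<d i. \<Sum>b<d i. \<Sum>c<d j. \<Sum>e<d j. \<rho> i a b * (\<rho> j c e * A (x(i:=b, j:=e)) (y(i:=a, j:=c))))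
      = (\<Sum>c<d j. \<Sum>e<d j. \<Sum>a<d i. \<Sum>b<d i. \<rho> i a b * (\<rho> j c e * A (x(i:=b, j:=e)) (y(i:=a, j:=c))))"
      by (simp only: sum.swap[where A="{..<d i}" and B="{..<d j}"])
    then show ?thesis
      using ij by (simp add: fun_upd_twist mult.left_commute)
  qed
  also have "\<dots> = \<E> j (\<E> i A) x y"
    using ij by (simp add: cond_exp_def sum_distrib_left conj_commute)
  finally show "\<E> i (\<E> j A) x y = \<E> j (\<E> i A) x y" .
qed

lemma cond_exp_cong:
  assumes "i < n" "\<forall>x\<in>S. \<forall>y\<in>S. A x y = B x y" "x \<in> S" "y \<in> S"
  shows "\<E> i A x y = \<E> i B x y"
  unfolding cond_exp_def using assms by (auto intro!: sum.cong simp: basis_upd)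

lemma hermitian_cond_exp:
  assumes i: "i < n" and h: "hermitian n d A"
  shows "hermitian n d (\<E> i A)"
  unfolding hermitian_def
proof (intro ballI)
  fix x y assume x: "x \<in> S" and y: "y \<in> S"
  have "cnj (\<rho> i a b) * cnj (A (y(i:=b)) (x(i:=a))) = \<rho> i b a * A (x(i:=a)) (y(i:=b))"
    if "a < d i" "b < d i" for a b
  proof -
    have "A (x(i:=a)) (y(i:=b)) = cnj (A (y(i:=b)) (x(i:=a)))"
      using h basis_upd[OF x i that(1)] basis_upd[OF y i that(2)] unfolding hermitian_def by blast
    then show ?thesis using rho_hermitian[OF i that(2) that(1)] by simp
  qed
  then have "cnj (\<E> i A y x) = (if x i = y i
      then (\<Sum>a<d i. \<Sum>b<d i. \<rho> i b a * A (x(i:=a)) (y(i:=b))) else 0)"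
    by (auto simp: cond_exp_def intro!: sum.cong)
  also have "\<dots> = \<E> i A x y"
    unfolding cond_exp_def by (subst sum.swap) simp
  finally show "\<E> i A x y = cnj (\<E> i A y x)" by simp
qed

lemma hermitian_cond_dev:
  assumes i: "i < n" and h: "hermitian n d A"
  shows "hermitian n d (\<D> i A)"
  using h hermitian_cond_exp[OF i h] unfolding hermitian_def cond_dev_def by (metis complex_cnj_diff)

lemma ptrace_cond_exp: assumes i: "i < n" shows "ptrace i (\<E> i A) = ptrace i A"
proof (intro ext)
  fix x y
  have "ptrace i (\<E> i A) x y = (\<Sum>a<d i. \<rho> i a a) * ptrace i A x y"
    by (simp add: ptrace_def cond_exp_upd mult_if_zero sum_distrib_right cong: if_cong)
  then show "ptrace i (\<E> i A) x y = ptrace i A x y"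
    by (simp add: trace_rho[OF i])
qed

lemma expect_eq: "E A = (\<Sum>x\<in>S. \<Sum>y\<in>S. R x y * A y x)"
  by (simp add: expect_def tr_def mmul_def)

lemma expect_mmul_eq: "E (A \<cdot> C) = (\<Sum>x\<in>S. \<Sum>y\<in>S. \<Sum>z\<in>S. R x y * (A y z * C z x))"
  by (simp add: expect_def tr_def mmul_def sum_distrib_left)

lemma slice_sum_expect:
  assumes i: "i < n"
  shows "(\<Sum>p<d i. \<Sum>q<d i. R (x(i:=p)) (y(i:=q)) * A (y(i:=q)) (x(i:=p)))
    = rho_except i x y * ptrace i A y x"
  by (simp add: R_upd[OF i] ptrace_def sum_distrib_left mult_ac)

lemma slice_sum_mmul_cond_exp_right:
  assumes i: "i < n"
  shows "(\<Sum>p<d i. \<Sum>q<d i. \<Sum>r<d i.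
      R (x(i:=p)) (y(i:=q)) * (A (y(i:=q)) (z(i:=r)) * \<E> i B (z(i:=r)) (x(i:=p))))
    = rho_except i x y * ptrace i A y z * ptrace i B z x"
proof -
  have "(\<Sum>p<d i. \<Sum>q<d i. \<Sum>r<d i.
      R (x(i:=p)) (y(i:=q)) * (A (y(i:=q)) (z(i:=r)) * \<E> i B (z(i:=r)) (x(i:=p))))
    = (\<Sum>p<d i. \<Sum>q<d i. \<rho> i p q * A (y(i:=q)) (z(i:=p)) * (rho_except i x y * ptrace i B z x))"
    by (simp add: R_upd[OF i] cond_exp_upd mult_if_zero mult_ac cong: if_cong)
  also have "\<dots> = rho_except i x y * ptrace i A y z * ptrace i B z x"
    by (simp add: ptrace_def sum_distrib_left sum_distrib_right mult_ac)
  finally show ?thesis .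
qed

lemma slice_sum_mmul_cond_exp_left:
  assumes i: "i < n"
  shows "(\<Sum>p<d i. \<Sum>q<d i. \<Sum>r<d i.
      R (x(i:=p)) (y(i:=q)) * (\<E> i A (y(i:=q)) (z(i:=r)) * B (z(i:=r)) (x(i:=p))))
    = rho_except i x y * ptrace i A y z * ptrace i B z x"
proof -
  have "(\<Sum>p<d i. \<Sum>q<d i. \<Sum>r<d i.
      R (x(i:=p)) (y(i:=q)) * (\<E> i A (y(i:=q)) (z(i:=r)) * B (z(i:=r)) (x(i:=p))))
    = (\<Sum>p<d i. \<Sum>q<d i. \<rho> i p q * B (z(i:=q)) (x(i:=p)) * (rho_except i x y * ptrace i A y z))"
    by (simp add: R_upd[OF i] cond_exp_upd mult_if_zero if_zero_mult mult_ac cong: if_cong)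
  also have "\<dots> = rho_except i x y * ptrace i B z x * ptrace i A y z"
    by (simp add: ptrace_def sum_distrib_left sum_distrib_right mult_ac)
  finally show ?thesis by (simp only: mult_ac)
qed

lemma expect_cond_exp: "i < n \<Longrightarrow> E (\<E> i A) = E A"
  unfolding expect_eq by (simp only: sum_basis_slice2 slice_sum_expect ptrace_cond_exp)

lemma expect_mmul_cond_exp_right: "i < n \<Longrightarrow> E (A \<cdot> \<E> i B) = E (\<E> i A \<cdot> \<E> i B)"
  unfolding expect_mmul_eq
  by (simp only: sum_basis_slice3 slice_sum_mmul_cond_exp_right ptrace_cond_exp)

lemma expect_mmul_cond_exp_left: "i < n \<Longrightarrow> E (\<E> i A \<cdot> B) = E (\<E> i A \<cdot> \<E> i B)"
  unfolding expect_mmul_eq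
  by (simp only: sum_basis_slice3 slice_sum_mmul_cond_exp_left ptrace_cond_exp)

lemma expect_add: "E (\<lambda>x y. A x y + B x y) = E A + E B"
  by (simp add: expect_eq distrib_left sum.distrib)

lemma expect_diff: "E (\<lambda>x y. A x y - B x y) = E A - E B"
  by (simp add: expect_eq right_diff_distrib sum_subtractf)

lemma expect_scale: "E (\<lambda>x y. c * A x y) = c * E A"
  by (simp add: expect_eq sum_distrib_left mult_ac)

lemma expect_sum: "E (\<lambda>x y. \<Sum>k\<in>K. f k x y) = (\<Sum>k\<in>K. E (f k))"
  by (simp add: expect_eq sum_distrib_left sum.swap[of _ K])

lemma expect_cong: "(\<forall>x\<in>S. \<forall>y\<in>S. A x y = B x y) \<Longrightarrow> E A = E B"
  by (simp add: expect_eq)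

lemma expect_mmul_cong:
  "(\<forall>x\<in>S. \<forall>y\<in>S. A x y = A' x y) \<Longrightarrow> (\<forall>x\<in>S. \<forall>y\<in>S. B x y = B' x y) \<Longrightarrow> E (A \<cdot> B) = E (A' \<cdot> B')"
  by (rule expect_cong) (simp add: mmul_def)

lemma mmul_diff_self:
  "(\<lambda>x y. A x y - C x y) \<cdot> (\<lambda>x y. A x y - C x y) = (\<lambda>x y. (A \<cdot> A) x y - (A \<cdot> C) x y - (C \<cdot> A) x y + (C \<cdot> C) x y)"
proof (intro ext)
  fix x y
  have "(A x z - C x z) * (A z y - C z y) = A x z * A z y - A x z * C z y - C x z * A z y + C x z * C z y"
    for z by (simp add: algebra_simps)
  then show "((\<lambda>x y. A x y - C x y) \<cdot> (\<lambda>x y. A x y - C x y)) x y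
      = (A \<cdot> A) x y - (A \<cdot> C) x y - (C \<cdot> A) x y + (C \<cdot> C) x y"
    unfolding mmul_def by (simp only: sum.distrib sum_subtractf)
qed

lemma expect_diff_sq:
  "E ((\<lambda>x y. A x y - C x y) \<cdot> (\<lambda>x y. A x y - C x y)) = E (A \<cdot> A) - E (A \<cdot> C) - E (C \<cdot> A) + E (C \<cdot> C)"
  unfolding mmul_diff_self by (simp add: expect_add expect_diff)

lemma expect_cond_dev_sq: "i < n \<Longrightarrow> E (\<D> i A \<cdot> \<D> i A) = E (A \<cdot> A) - E (\<E> i A \<cdot> \<E> i A)"
  unfolding cond_dev_def expect_diff_sq
  by (simp add: expect_mmul_cond_exp_right[of i A A] expect_mmul_cond_exp_left[of i A A])

lemma R_gram: "\<exists>W. \<forall>x\<in>S. \<forall>y\<in>S. R x y = (\<Sum>\<kappa>\<in>S. W \<kappa> x * cnj (W \<kappa> y))"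
proof -
  have "\<forall>i\<in>{..<n}. \<exists>w. \<forall>a<d i. \<forall>b<d i. \<rho> i a b = (\<Sum>k<d i. w k a * cnj (w k b))"
    using states psd_gram_decomposition[OF density_matrix_psd] by blast
  from bchoice[OF this] obtain w
    where w: "\<forall>i<n. \<forall>a<d i. \<forall>b<d i. \<rho> i a b = (\<Sum>k<d i. w i k a * cnj (w i k b))"
    by auto
  have "R x y = (\<Sum>\<kappa>\<in>S. (\<Prod>k<n. w k (\<kappa> k) (x k)) * cnj (\<Prod>k<n. w k (\<kappa> k) (y k)))"
    if "x \<in> S" "y \<in> S" for x y
  proof -
    have "R x y = (\<Prod>k<n. \<Sum>c<d k. w k c (x k) * cnj (w k c (y k)))"
      unfolding product_state_def using w basis_lt[OF that(1)] basis_lt[OF that(2)]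
      by (intro prod.cong) blast+
    also have "\<dots> = (\<Sum>\<kappa>\<in>S. \<Prod>k<n. w k (\<kappa> k) (x k) * cnj (w k (\<kappa> k) (y k)))"
      unfolding basis_def by (rule prod_sum_PiE) auto
    finally show ?thesis by (simp add: prod.distrib cnj_prod)
  qed
  then show ?thesis by (intro exI[of _ "\<lambda>\<kappa> x. \<Prod>k<n. w k (\<kappa> k) (x k)"]) blast
qed

text \<open>With \<open>R = \<Sum>\<^sub>\<kappa> w\<^sub>\<kappa> w\<^sub>\<kappa>\<^sup>*\<close>, \<open>E (B \<cdot> B) = \<Sum>\<^sub>\<kappa> \<parallel>B w\<^sub>\<kappa>\<parallel>\<^sup>2\<close> for Hermitian \<open>B\<close>.\<close>
lemma expect_sq_nonneg:
  assumes h: "hermitian n d B"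
  shows "0 \<le> E (B \<cdot> B)"
proof -
  obtain W where W: "\<forall>x\<in>S. \<forall>y\<in>S. R x y = (\<Sum>\<kappa>\<in>S. W \<kappa> x * cnj (W \<kappa> y))"
    using R_gram by blast
  define u where "u = (\<lambda>z \<kappa>. \<Sum>y\<in>S. cnj (W \<kappa> y) * B y z)"
  have "E (B \<cdot> B) = (\<Sum>x\<in>S. \<Sum>y\<in>S. \<Sum>z\<in>S. \<Sum>\<kappa>\<in>S. (W \<kappa> x * B z x) * (cnj (W \<kappa> y) * B y z))"
    unfolding expect_mmul_eq using W
    by (intro sum.cong refl) (simp add: sum_distrib_left sum_distrib_right mult_ac)
  also have "\<dots> = (\<Sum>z\<in>S. \<Sum>\<kappa>\<in>S. \<Sum>x\<in>S. \<Sum>y\<in>S. (W \<kappa> x * B z x) * (cnj (W \<kappa> y) * B y z))"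
    by (rule sum_swap_pairs)
  also have "\<dots> = (\<Sum>z\<in>S. \<Sum>\<kappa>\<in>S. cnj (u z \<kappa>) * u z \<kappa>)"
  proof (intro sum.cong refl)
    fix z \<kappa> assume z: "z \<in> S"
    have "cnj (u z \<kappa>) = (\<Sum>x\<in>S. W \<kappa> x * B z x)"
    proof -
      have "B z x = cnj (B x z)" if "x \<in> S" for x
        using h z that unfolding hermitian_def by blast
      then show ?thesis unfolding u_def cnj_sum by (intro sum.cong) auto
    qed
    then show "(\<Sum>x\<in>S. \<Sum>y\<in>S. (W \<kappa> x * B z x) * (cnj (W \<kappa> y) * B y z)) = cnj (u z \<kappa>) * u z \<kappa>"
      by (simp add: u_def sum_product)
  qed
  also have "0 \<le> \<dots>"
    by (intro sum_nonneg cnj_mult_self_nonneg)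
  finally show ?thesis by simp
qed

lemma expect_cond_exp_sq_le:
  assumes i: "i < n" and h: "hermitian n d A"
  shows "E (\<E> i A \<cdot> \<E> i A) \<le> E (A \<cdot> A)"
  using expect_sq_nonneg[OF hermitian_cond_dev[OF i h]] unfolding expect_cond_dev_sq[OF i] by simp

section \<open>The Efron--Stein inequality\<close>

text \<open>\<open>cond_exp_upto k\<close> is \<open>\<E>\<^sub>0 \<circ> \<dots> \<circ> \<E>\<^sub>k\<^sub>-\<^sub>1\<close>; the \<open>\<E>\<^sub>i\<close> commute, so the order is immaterial.\<close>
primrec cond_exp_upto :: "nat \<Rightarrow> op \<Rightarrow> op" where
  "cond_exp_upto 0 A = A"
| "cond_exp_upto (Suc k) A = cond_exp_upto k (\<E> k A)"

lemma cond_exp_upto_diff: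
  "cond_exp_upto k (\<lambda>x y. A x y - B x y) = (\<lambda>x y. cond_exp_upto k A x y - cond_exp_upto k B x y)"
  by (induction k arbitrary: A B) (simp_all add: cond_exp_diff)

lemma cond_exp_upto_zero: "cond_exp_upto k (\<lambda>x y. 0) = (\<lambda>x y. 0)"
  by (induction k) (simp_all add: cond_exp_zero)

lemma cond_exp_cond_exp_upto: "k \<le> j \<Longrightarrow> \<E> j (cond_exp_upto k A) = cond_exp_upto k (\<E> j A)"
  by (induction k arbitrary: A) (simp_all add: cond_exp_commute)

lemma cond_exp_upto_absorb: "i < k \<Longrightarrow> k \<le> n \<Longrightarrow> \<E> i (cond_exp_upto k A) = cond_exp_upto k A"
proof (induction k arbitrary: A)
  case 0
  then show ?case by simp
next
  case (Suc k)
  show ?case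
  proof (cases "i < k")
    case True
    then show ?thesis using Suc by simp
  next
    case False
    with Suc.prems have "i = k" by simp
    then show ?thesis
      using Suc.prems by (simp add: cond_exp_cond_exp_upto cond_exp_idem)
  qed
qed

lemma expect_cond_exp_upto: "k \<le> n \<Longrightarrow> E (cond_exp_upto k A) = E A"
  by (induction k arbitrary: A) (simp_all add: expect_cond_exp)

lemma expect_cond_exp_upto_sq_le:
  "k \<le> n \<Longrightarrow> hermitian n d A \<Longrightarrow> E (cond_exp_upto k A \<cdot> cond_exp_upto k A) \<le> E (A \<cdot> A)"
proof (induction k arbitrary: A)
  case 0
  then show ?case by simp
next
  case (Suc k)
  then have "E (cond_exp_upto (Suc k) A \<cdot> cond_exp_upto (Suc k) A) \<le> E (\<E> k A \<cdot> \<E> k A)"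
    using hermitian_cond_exp[of k A] by simp
  also have "\<dots> \<le> E (A \<cdot> A)"
    using expect_cond_exp_sq_le[of k A] Suc.prems by simp
  finally show ?case .
qed

lemma invariant_under_updates_const:
  assumes inv: "\<And>f i c. i < n \<Longrightarrow> g (f(i:=c)) = g f" and x: "x \<in> S" and y: "y \<in> S"
  shows "g x = g y"
proof -
  define m where "m = (\<lambda>k j. if j < k then y j else x j)"
  have "g (m k) = g x" if "k \<le> n" for k
    using that
  proof (induction k)
    case 0
    then show ?case by (simp add: m_def)
  next
    case (Suc k)
    have "m (Suc k) = (m k)(k := y k)" by (auto simp: m_def)
    then have "g (m (Suc k)) = g (m k)"
      using Suc.prems by (simp only: inv Suc_le_lessD)
    with Suc show ?case by simp
  qed
  moreover have "m n = y"
    using x y unfolding m_def basis_iff by (auto intro!: ext)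
  ultimately show ?thesis by (metis order_refl)
qed

lemma invariant_imp_scalar:
  assumes inv: "\<forall>i<n. \<E> i Z = Z"
  shows "\<exists>e. \<forall>x\<in>S. \<forall>y\<in>S. Z x y = (if x = y then e else 0)"
proof -
  define x0 :: idx where "x0 = (\<lambda>j. if j < n then 0 else undefined)"
  have x0: "x0 \<in> S" using dims by (auto simp: basis_iff x0_def)
  have "Z (f(i:=c)) (f(i:=c)) = Z f f" if "i < n" for f i c
    using inv that cond_exp_upd[of i Z f c f c] cond_exp_eq[of i Z f f] by simp
  then have "Z x x = Z x0 x0" if "x \<in> S" for x
    using invariant_under_updates_const[where g = "\<lambda>f. Z f f", OF _ that x0] by blast
  moreover have "Z x y = 0" if xy: "x \<in> S" "y \<in> S" "x \<noteq> y" for x y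
  proof -
    obtain i where "i < n" "x i \<noteq> y i" using basis_eqI[OF xy(1,2)] xy(3) by blast
    then show ?thesis using inv cond_exp_eq[of i Z x y] by simp
  qed
  ultimately show ?thesis by (intro exI[of _ "Z x0 x0"]) auto
qed

lemma expect_scalar:
  assumes "\<forall>x\<in>S. \<forall>y\<in>S. B x y = (if x = y then e else 0)"
  shows "E B = e"
  using assms trace_R by (simp add: expect_eq mult_if_zero sum_distrib_right[symmetric] cong: sum.cong)

lemma expect_mmul_scalar_right:
  assumes "\<forall>x\<in>S. \<forall>y\<in>S. B x y = (if x = y then e else 0)"
  shows "E (A \<cdot> B) = e * E A"
proof -
  have "E (A \<cdot> B) = E (\<lambda>x y. e * A x y)"
    using assms by (intro expect_cong) (simp add: mmul_def mult_if_zero mult.commute cong: sum.cong)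
  then show ?thesis by (simp add: expect_scale)
qed

lemma expect_mmul_scalar_left:
  assumes "\<forall>x\<in>S. \<forall>y\<in>S. B x y = (if x = y then e else 0)"
  shows "E (B \<cdot> A) = e * E A"
proof -
  have "E (B \<cdot> A) = E (\<lambda>x y. e * A x y)"
    using assms by (intro expect_cong) (simp add: mmul_def if_zero_mult cong: sum.cong)
  then show ?thesis by (simp add: expect_scale)
qed

lemma mmul_sum:
  "(\<lambda>x y. \<Sum>k\<in>K. f k x y) \<cdot> (\<lambda>x y. \<Sum>l\<in>L. g l x y) = (\<lambda>x y. \<Sum>k\<in>K. \<Sum>l\<in>L. (f k \<cdot> g l) x y)"
proof (intro ext)
  fix x y
  have "((\<lambda>x y. \<Sum>k\<in>K. f k x y) \<cdot> (\<lambda>x y. \<Sum>l\<in>L. g l x y)) x y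
      = (\<Sum>z\<in>S. \<Sum>k\<in>K. \<Sum>l\<in>L. f k x z * g l z y)"
    by (simp add: mmul_def sum_product)
  also have "\<dots> = (\<Sum>k\<in>K. \<Sum>l\<in>L. \<Sum>z\<in>S. f k x z * g l z y)"
    by (simp only: sum.swap[of _ S])
  finally show "((\<lambda>x y. \<Sum>k\<in>K. f k x y) \<cdot> (\<lambda>x y. \<Sum>l\<in>L. g l x y)) x y
      = (\<Sum>k\<in>K. \<Sum>l\<in>L. (f k \<cdot> g l) x y)"
    by (simp add: mmul_def)
qed

definition mart_diff :: "op \<Rightarrow> nat \<Rightarrow> op" where
  "mart_diff X k = cond_exp_upto k (\<D> k X)"

lemma mart_diff_eq: "mart_diff X k = (\<lambda>x y. cond_exp_upto k X x y - cond_exp_upto (Suc k) X x y)"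
  by (simp add: mart_diff_def cond_dev_def cond_exp_upto_diff)

lemma cond_exp_mart_diff_self: "k < n \<Longrightarrow> \<E> k (mart_diff X k) = (\<lambda>x y. 0)"
  by (simp add: mart_diff_def cond_exp_cond_exp_upto cond_dev_def cond_exp_diff cond_exp_idem
      cond_exp_upto_zero)

lemma expect_mmul_mart_diff_orth:
  assumes k: "k < n" and l: "l < n" and kl: "k \<noteq> l"
  shows "E (mart_diff X k \<cdot> mart_diff X l) = 0"
proof (cases "k < l")
  case True
  then have "E (mart_diff X k \<cdot> mart_diff X l) = E (mart_diff X k \<cdot> \<E> k (mart_diff X l))"
    using k l by (simp add: mart_diff_def cond_exp_upto_absorb)
  also have "\<dots> = E (\<E> k (mart_diff X k) \<cdot> \<E> k (mart_diff X l))"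
    by (rule expect_mmul_cond_exp_right[OF k])
  also have "\<dots> = 0"
    by (simp add: cond_exp_mart_diff_self[OF k] expect_eq mmul_def)
  finally show ?thesis .
next
  case False
  with kl have "l < k" by simp
  then have "E (mart_diff X k \<cdot> mart_diff X l) = E (\<E> l (mart_diff X k) \<cdot> mart_diff X l)"
    using k l by (simp add: mart_diff_def cond_exp_upto_absorb)
  also have "\<dots> = E (\<E> l (mart_diff X k) \<cdot> \<E> l (mart_diff X l))"
    by (rule expect_mmul_cond_exp_left[OF l])
  also have "\<dots> = 0"
    by (simp add: cond_exp_mart_diff_self[OF l] expect_eq mmul_def)
  finally show ?thesis .
qed

theorem efron_stein:
  assumes h: "hermitian n d X"
  shows "var n d R X \<le> (\<Sum>k<n. E (\<D> k X \<cdot> \<D> k X))"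
proof -
  define P where "P = cond_exp_upto n X"
  obtain e where e: "\<forall>x\<in>S. \<forall>y\<in>S. P x y = (if x = y then e else 0)"
    using invariant_imp_scalar[of P] unfolding P_def by (auto simp: cond_exp_upto_absorb)
  have "e = E X"
    using expect_scalar[OF e] expect_cond_exp_upto[of n X] by (simp add: P_def)
  then have "var n d R X = E ((\<lambda>x y. X x y - P x y) \<cdot> (\<lambda>x y. X x y - P x y))"
    unfolding expect_diff_sq expect_mmul_scalar_right[OF e] expect_mmul_scalar_left[OF e] expect_scalar[OF e]
    by (simp add: var_def power2_eq_square)
  also have "(\<lambda>x y. X x y - P x y) = (\<lambda>x y. \<Sum>k<n. mart_diff X k x y)"
    using sum_lessThan_telescope'[of "\<lambda>k. cond_exp_upto k X _ _" n]
    by (simp add: P_def mart_diff_eq del: cond_exp_upto.simps(2))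
  also have "E ((\<lambda>x y. \<Sum>k<n. mart_diff X k x y) \<cdot> (\<lambda>x y. \<Sum>k<n. mart_diff X k x y))
      = (\<Sum>k<n. \<Sum>l<n. E (mart_diff X k \<cdot> mart_diff X l))"
    unfolding mmul_sum by (simp add: expect_sum)
  also have "\<dots> = (\<Sum>k<n. E (mart_diff X k \<cdot> mart_diff X k))"
    using expect_mmul_mart_diff_orth by (intro sum.cong refl) (simp add: sum.remove)
  also have "\<dots> \<le> (\<Sum>k<n. E (\<D> k X \<cdot> \<D> k X))"
    unfolding mart_diff_def
    using expect_cond_exp_upto_sq_le hermitian_cond_dev[OF _ h] by (intro sum_mono) simp
  finally show ?thesis .
qed

section \<open>The swap trick\<close>

definition swap_pair :: "nat \<Rightarrow> idx \<times> idx \<Rightarrow> idx \<times> idx" where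
  "swap_pair i p = ((fst p)(i := snd p i), (snd p)(i := fst p i))"

lemma swap_pair_basis: "p \<in> S \<times> S \<Longrightarrow> i < n \<Longrightarrow> swap_pair i p \<in> S \<times> S"
  by (cases p) (auto simp: swap_pair_def basis_upd basis_lt)

lemma mmul2_swap_op:
  assumes p: "p \<in> S \<times> S" and i: "i < n"
  shows "mmul2 n d M (swap_op i) q p = M q (swap_pair i p)"
proof -
  have "swap_op i s p = (if s = swap_pair i p then 1 else 0)" for s
    by (cases s, cases p) (auto simp: swap_op_def swap_pair_def)
  then show ?thesis
    using swap_pair_basis[OF p i] by (simp add: mmul2_def mult_if_zero sum.delta')
qed

lemma sum_R_upd_diag:
  assumes i: "i < n" and e: "e < d i"
  shows "(\<Sum>y\<in>S. R y (y(i:=e)) * f (y i)) = (\<Sum>c<d i. \<rho> i c e * f c)"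
proof -
  have "(\<Sum>y\<in>S. R y (y(i:=e)) * f (y i))
      = (\<Sum>u\<in>slice i. rho_except i u u * (\<Sum>c<d i. \<rho> i c e * f c))"
    by (simp add: sum_basis_slice[OF i] R_upd[OF i] sum_distrib_left mult_ac)
  then show ?thesis
    by (simp add: sum_distrib_right[symmetric] trace_rho_except[OF i])
qed

lemma expect2_swap_sandwich_expand:
  assumes i: "i < n"
  shows "expect2 n d (tensor R R)
      (mmul2 n d (mmul2 n d (mmul2 n d (ext_id A) (swap_op i)) (ext_id A)) (swap_op i))
    = (\<Sum>y\<in>S. \<Sum>y'\<in>S. \<Sum>x\<in>S. \<Sum>x'\<in>S. \<Sum>z\<in>S. \<Sum>z'\<in>S.
        R y x * R y' x' * ((A x (z(i := z' i)) * (if x' = z'(i := z i) then 1 else 0)) *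
          (A z (y(i := y' i)) * (if z' = y'(i := y i) then 1 else 0))))"
    (is "_ = ?rhs")
proof -
  let ?AI = "ext_id A" and ?F = "swap_op i"
  have entry: "mmul2 n d (mmul2 n d (mmul2 n d ?AI ?F) ?AI) ?F q p
      = (\<Sum>t\<in>S \<times> S. ?AI q (swap_pair i t) * ?AI t (swap_pair i p))"
    if p: "p \<in> S \<times> S" for p q
  proof -
    have "mmul2 n d (mmul2 n d (mmul2 n d ?AI ?F) ?AI) ?F q p
        = mmul2 n d (mmul2 n d ?AI ?F) ?AI q (swap_pair i p)"
      by (rule mmul2_swap_op[OF p i])
    also have "\<dots> = (\<Sum>t\<in>S \<times> S. mmul2 n d ?AI ?F q t * ?AI t (swap_pair i p))"
      by (simp add: mmul2_def)
    also have "\<dots> = (\<Sum>t\<in>S \<times> S. ?AI q (swap_pair i t) * ?AI t (swap_pair i p))"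
      by (rule sum.cong[OF refl]) (simp add: mmul2_swap_op[OF _ i])
    finally show ?thesis .
  qed
  have "expect2 n d (tensor R R) (mmul2 n d (mmul2 n d (mmul2 n d ?AI ?F) ?AI) ?F)
     = (\<Sum>p\<in>S \<times> S. \<Sum>q\<in>S \<times> S. tensor R R p q * (\<Sum>t\<in>S \<times> S. ?AI q (swap_pair i t) * ?AI t (swap_pair i p)))"
    unfolding expect2_def tr2_def mmul2_def[of _ _ "tensor R R"]
    by (rule sum.cong[OF refl], rule sum.cong[OF refl]) (simp add: entry)
  also have "\<dots> = ?rhs"
    by (simp add: sum.cartesian_product' tensor_def ext_id_def swap_pair_def sum_distrib_left mult_ac)
  finally show ?thesis .
qed

lemma sum_swap_deltas:
  assumes i: "i < n" and y: "y \<in> S" and y': "y' \<in> S" and z: "z \<in> S"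
  shows "(\<Sum>x'\<in>S. \<Sum>z'\<in>S.
        R y x * R y' x' * ((A x (z(i := z' i)) * (if x' = z'(i := z i) then 1 else 0)) *
          (A z (y(i := y' i)) * (if z' = y'(i := y i) then 1 else 0))))
    = R y x * R y' (y'(i := z i)) * (A x (z(i := y i)) * A z (y(i := y' i)))"
  (is "(\<Sum>x'\<in>S. \<Sum>z'\<in>S. ?T x' z') = ?V")
proof -
  have summand: "?T x' z' = (if z' = y'(i := y i) then (if x' = y'(i := z i) then ?V else 0) else 0)"
    for x' z'
    by auto
  have "y'(i := y i) \<in> S" "y'(i := z i) \<in> S"
    using basis_upd[OF y' i] basis_lt[OF y i] basis_lt[OF z i] by auto
  then show ?thesis
    unfolding summand by (simp add: sum.delta' cong: if_cong)
qed

lemma expect2_swap_sandwich_reduce: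
  assumes i: "i < n"
  shows "expect2 n d (tensor R R)
      (mmul2 n d (mmul2 n d (mmul2 n d (ext_id A) (swap_op i)) (ext_id A)) (swap_op i))
    = (\<Sum>y\<in>S. \<Sum>x\<in>S. \<Sum>z\<in>S. R y x * A x (z(i := y i)) * (\<Sum>c<d i. \<rho> i c (z i) * A z (y(i := c))))"
proof -
  let ?V = "\<lambda>y y' x z. R y x * R y' (y'(i := z i)) * (A x (z(i := y i)) * A z (y(i := y' i)))"
  have "expect2 n d (tensor R R)
      (mmul2 n d (mmul2 n d (mmul2 n d (ext_id A) (swap_op i)) (ext_id A)) (swap_op i))
     = (\<Sum>y\<in>S. \<Sum>y'\<in>S. \<Sum>x\<in>S. \<Sum>z\<in>S. ?V y y' x z)"
    unfolding expect2_swap_sandwich_expand[OF i]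
  proof (rule sum.cong[OF refl], rule sum.cong[OF refl], rule sum.cong[OF refl])
    fix y y' x assume "y \<in> S" "y' \<in> S"
    then show "(\<Sum>x'\<in>S. \<Sum>z\<in>S. \<Sum>z'\<in>S.
        R y x * R y' x' * ((A x (z(i := z' i)) * (if x' = z'(i := z i) then 1 else 0)) *
          (A z (y(i := y' i)) * (if z' = y'(i := y i) then 1 else 0)))) = (\<Sum>z\<in>S. ?V y y' x z)"
      by (subst sum.swap) (intro sum.cong refl sum_swap_deltas[OF i])
  qed
  also have "\<dots> = (\<Sum>y\<in>S. \<Sum>x\<in>S. \<Sum>y'\<in>S. \<Sum>z\<in>S. ?V y y' x z)"
    by (rule sum.cong[OF refl], rule sum.swap)
  also have "\<dots> = (\<Sum>y\<in>S. \<Sum>x\<in>S. \<Sum>z\<in>S. \<Sum>y'\<in>S. ?V y y' x z)"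
    by (rule sum.cong[OF refl], rule sum.cong[OF refl], rule sum.swap)
  also have "\<dots> = (\<Sum>y\<in>S. \<Sum>x\<in>S. \<Sum>z\<in>S.
      R y x * A x (z(i := y i)) * (\<Sum>c<d i. \<rho> i c (z i) * A z (y(i := c))))"
  proof (intro sum.cong refl)
    fix y x z assume "z \<in> S"
    have "(\<Sum>y'\<in>S. ?V y y' x z)
        = R y x * A x (z(i := y i)) * (\<Sum>y'\<in>S. R y' (y'(i := z i)) * A z (y(i := y' i)))"
      by (simp add: sum_distrib_left mult_ac)
    also have "(\<Sum>y'\<in>S. R y' (y'(i := z i)) * A z (y(i := y' i)))
        = (\<Sum>c<d i. \<rho> i c (z i) * A z (y(i := c)))"
      using \<open>z \<in> S\<close> by (intro sum_R_upd_diag[OF i basis_lt[OF _ i]])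
    finally show "(\<Sum>y'\<in>S. ?V y y' x z)
        = R y x * A x (z(i := y i)) * (\<Sum>c<d i. \<rho> i c (z i) * A z (y(i := c)))" .
  qed
  finally show ?thesis .
qed

lemma slice_sum_swap_sandwich:
  assumes i: "i < n"
  shows "(\<Sum>p<d i. \<Sum>q<d i. \<Sum>r<d i. R (y(i:=p)) (x(i:=q)) * A (x(i:=q)) (z(i:=p))
      * (\<Sum>c<d i. \<rho> i c r * A (z(i:=r)) (y(i:=c))))
    = rho_except i y x * ptrace i A x z * ptrace i A z y"
proof -
  have "(\<Sum>p<d i. \<Sum>q<d i. \<Sum>r<d i. R (y(i:=p)) (x(i:=q)) * A (x(i:=q)) (z(i:=p))
      * (\<Sum>c<d i. \<rho> i c r * A (z(i:=r)) (y(i:=c))))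
    = rho_except i y x * (\<Sum>p<d i. \<Sum>q<d i. \<rho> i p q * A (x(i:=q)) (z(i:=p)))
      * (\<Sum>r<d i. \<Sum>c<d i. \<rho> i c r * A (z(i:=r)) (y(i:=c)))"
    by (simp add: R_upd[OF i] sum_distrib_left sum_distrib_right mult_ac)
  also have "(\<Sum>r<d i. \<Sum>c<d i. \<rho> i c r * A (z(i:=r)) (y(i:=c))) = ptrace i A z y"
    unfolding ptrace_def by (rule sum.swap)
  finally show ?thesis
    unfolding ptrace_def[of i A x z] .
qed

theorem expect2_swap_sandwich:
  assumes i: "i < n"
  shows "expect2 n d (tensor R R)
      (mmul2 n d (mmul2 n d (mmul2 n d (ext_id A) (swap_op i)) (ext_id A)) (swap_op i))
    = E (\<E> i A \<cdot> \<E> i A)"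
  unfolding expect2_swap_sandwich_reduce[OF i] expect_mmul_eq
  by (simp only: sum_basis_slice3[OF i] fun_upd_same fun_upd_upd slice_sum_swap_sandwich[OF i]
      slice_sum_mmul_cond_exp_right[OF i] ptrace_cond_exp[OF i])

end

section \<open>Two-body observables\<close>

lemma sum_pairs_through:
  fixes g :: "nat \<Rightarrow> nat \<Rightarrow> 'a::comm_monoid_add"
  assumes k: "k < n"
    and zero: "\<And>i j. i < n \<Longrightarrow> j < n \<Longrightarrow> i \<noteq> j \<Longrightarrow> k \<noteq> i \<Longrightarrow> k \<noteq> j \<Longrightarrow> g i j = 0"
  shows "(\<Sum>i<n. \<Sum>j\<in>{..<n} - {i}. g i j) = (\<Sum>j\<in>{..<n} - {k}. g k j) + (\<Sum>i\<in>{..<n} - {k}. g i k)"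
proof -
  have "(\<Sum>i<n. \<Sum>j\<in>{..<n} - {i}. g i j)
      = (\<Sum>j\<in>{..<n} - {k}. g k j) + (\<Sum>i\<in>{..<n} - {k}. \<Sum>j\<in>{..<n} - {i}. g i j)"
    using k by (simp add: sum.remove[of "{..<n}" k])
  also have "(\<Sum>i\<in>{..<n} - {k}. \<Sum>j\<in>{..<n} - {i}. g i j) = (\<Sum>i\<in>{..<n} - {k}. g i k)"
  proof (intro sum.cong refl)
    fix i assume i: "i \<in> {..<n} - {k}"
    have "(\<Sum>j\<in>{..<n} - {i}. g i j) = g i k + (\<Sum>j\<in>{..<n} - {i} - {k}. g i j)"
      using i k by (subst sum.remove[of _ k]) auto
    also have "(\<Sum>j\<in>{..<n} - {i} - {k}. g i j) = 0"
      using i zero by (intro sum.neutral) auto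
    finally show "(\<Sum>j\<in>{..<n} - {i}. g i j) = g i k" by simp
  qed
  finally show ?thesis .
qed

context product_state_space
begin

lemma cond_exp_local:
  assumes k: "k < n" "k \<noteq> i" "k \<noteq> j" and loc: "local_on n d i j A"
    and x: "x \<in> S" and y: "y \<in> S"
  shows "\<E> k A x y = A x y"
proof -
  let ?L = "{..<n} - {i, j}"
  obtain Y where Y: "\<forall>x\<in>S. \<forall>y\<in>S. A x y
      = (if \<forall>l\<in>?L. x l = y l then Y (x i) (x j) (y i) (y j) else 0)"
    using loc unfolding local_on_def by blast
  have kL: "k \<in> ?L" using k by simp
  show ?thesis
  proof (cases "x k = y k")
    case False
    then show ?thesis using Y x y kL by (auto simp: cond_exp_eq)
  next
    case True
    have upd: "A (x(k:=b)) (y(k:=a)) = (if b = a then A x y else 0)" if "a < d k" "b < d k" for a b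
    proof -
      have "(\<forall>l\<in>?L. (x(k:=b)) l = (y(k:=a)) l) \<longleftrightarrow> b = a \<and> (\<forall>l\<in>?L. x l = y l)"
        using kL True by auto
      then show ?thesis
        using Y x y basis_upd[OF x k(1) that(2)] basis_upd[OF y k(1) that(1)] k by simp
    qed
    have "\<E> k A x y = (\<Sum>a<d k. \<Sum>b<d k. \<rho> k a b * (if b = a then A x y else 0))"
      using True unfolding cond_exp_eq ptrace_def by (simp add: upd)
    also have "\<dots> = (\<Sum>a<d k. \<rho> k a a) * A x y"
      by (simp add: mult_if_zero sum_distrib_right cong: if_cong)
    finally show ?thesis by (simp add: trace_rho[OF k(1)])
  qed
qed

lemma hermitian_sum: "\<forall>k\<in>K. hermitian n d (f k) \<Longrightarrow> hermitian n d (\<lambda>x y. \<Sum>k\<in>K. f k x y)"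
  unfolding hermitian_def cnj_sum by (metis (mono_tags, lifting) sum.cong)

lemma mmul_scale_both: "(\<lambda>x y. c * A x y) \<cdot> (\<lambda>x y. c * B x y) = (\<lambda>x y. (c * c) * (A \<cdot> B) x y)"
  by (auto simp: mmul_def sum_distrib_left mult_ac intro!: ext)

text \<open>Only the pairs containing \<open>k\<close> survive \<open>\<D>\<^sub>k\<close>, and each such pair occurs twice.\<close>
lemma cond_dev_pair_sum:
  assumes k: "k < n"
    and symm: "\<forall>i<n. \<forall>j<n. i \<noteq> j \<longrightarrow> (\<forall>x\<in>S. \<forall>y\<in>S. Xp i j x y = Xp j i x y)"
    and loc: "\<forall>i<n. \<forall>j<n. i \<noteq> j \<longrightarrow> local_on n d i j (Xp i j)"
    and x: "x \<in> S" and y: "y \<in> S"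
  shows "\<D> k (\<lambda>x y. \<Sum>i<n. \<Sum>j\<in>{..<n} - {i}. Xp i j x y) x y
    = 2 * \<D> k (\<lambda>x y. \<Sum>j\<in>{..<n} - {k}. Xp k j x y) x y"
proof -
  define g where "g i j = \<D> k (Xp i j) x y" for i j
  have "\<D> k (\<lambda>x y. \<Sum>i<n. \<Sum>j\<in>{..<n} - {i}. Xp i j x y) x y = (\<Sum>i<n. \<Sum>j\<in>{..<n} - {i}. g i j)"
    by (simp add: g_def cond_dev_def cond_exp_sum sum_subtractf)
  also have "\<dots> = (\<Sum>j\<in>{..<n} - {k}. g k j) + (\<Sum>i\<in>{..<n} - {k}. g i k)"
  proof (rule sum_pairs_through[OF k])
    fix i j assume "i < n" "j < n" "i \<noteq> j" "k \<noteq> i" "k \<noteq> j"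
    then show "g i j = 0"
      using cond_exp_local[OF k _ _ _ x y] loc by (simp add: g_def cond_dev_def)
  qed
  also have "(\<Sum>i\<in>{..<n} - {k}. g i k) = (\<Sum>j\<in>{..<n} - {k}. g k j)"
  proof (intro sum.cong refl)
    fix i assume "i \<in> {..<n} - {k}"
    then have "\<forall>x\<in>S. \<forall>y\<in>S. Xp i k x y = Xp k i x y" using symm k by auto
    then show "g i k = g k i"
      using cond_exp_cong[OF k _ x y] x y by (simp add: g_def cond_dev_def)
  qed
  also have "(\<Sum>j\<in>{..<n} - {k}. g k j) + (\<Sum>j\<in>{..<n} - {k}. g k j)
      = 2 * \<D> k (\<lambda>x y. \<Sum>j\<in>{..<n} - {k}. Xp k j x y) x y"
    by (simp add: g_def cond_dev_def cond_exp_sum sum_subtractf)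
  finally show ?thesis .
qed

end

theorem corollary6p7:
  fixes n :: nat and d :: "nat \<Rightarrow> nat"
    and \<rho> :: "nat \<Rightarrow> nat \<Rightarrow> nat \<Rightarrow> complex"
    and Xp :: "nat \<Rightarrow> nat \<Rightarrow> op"
  assumes dims: "\<forall>i<n. d i \<ge> 1"
    and states: "\<forall>i<n. density_matrix (d i) (\<rho> i)"
    and symm: "\<forall>i<n. \<forall>j<n. i \<noteq> j \<longrightarrow>
                 (\<forall>x\<in>basis n d. \<forall>y\<in>basis n d. Xp i j x y = Xp j i x y)"
    and obs: "\<forall>i<n. \<forall>j<n. i \<noteq> j \<longrightarrow> hermitian n d (Xp i j) \<and> local_on n d i j (Xp i j)"
  defines "rhoK \<equiv> product_state n \<rho>"
    and "Xi \<equiv> \<lambda>i x y. \<Sum>j\<in>{..<n} - {i}. Xp i j x y"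
    and "X \<equiv> \<lambda>x y. \<Sum>i<n. \<Sum>j\<in>{..<n} - {i}. Xp i j x y"
  shows "var n d rhoK X \<le>
           4 * (\<Sum>i<n. expect n d rhoK
                 (mmul n d (cond_dev d \<rho> i (Xi i)) (cond_dev d \<rho> i (Xi i))))
       \<and> 4 * (\<Sum>i<n. expect n d rhoK
                 (mmul n d (cond_dev d \<rho> i (Xi i)) (cond_dev d \<rho> i (Xi i))))
         = 4 * (\<Sum>i<n. expect n d rhoK (mmul n d (Xi i) (Xi i)))
           - 4 * (\<Sum>i<n. expect2 n d (tensor rhoK rhoK)
                 (mmul2 n d (mmul2 n d (mmul2 n d (ext_id (Xi i)) (swap_op i)) (ext_id (Xi i)))
                    (swap_op i)))"
proof -
  interpret product_state_space n d \<rho>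
    using dims states by unfold_locales
  have "hermitian n d X"
    unfolding X_def using obs by (intro hermitian_sum ballI) auto
  then have "var n d R X \<le> (\<Sum>i<n. E (\<D> i X \<cdot> \<D> i X))"
    by (rule efron_stein)
  also have "\<dots> = 4 * (\<Sum>i<n. E (\<D> i (Xi i) \<cdot> \<D> i (Xi i)))"
  proof -
    have "E (\<D> i X \<cdot> \<D> i X) = E ((\<lambda>x y. 2 * \<D> i (Xi i) x y) \<cdot> (\<lambda>x y. 2 * \<D> i (Xi i) x y))"
      if "i < n" for i
      using cond_dev_pair_sum[OF that symm] obs unfolding X_def Xi_def
      by (intro expect_mmul_cong) auto
    then show ?thesis
      by (simp add: mmul_scale_both expect_scale sum_distrib_left)
  qed
  moreover have "E (\<D> i (Xi i) \<cdot> \<D> i (Xi i))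
      = E (Xi i \<cdot> Xi i) - expect2 n d (tensor R R)
          (mmul2 n d (mmul2 n d (mmul2 n d (ext_id (Xi i)) (swap_op i)) (ext_id (Xi i))) (swap_op i))"
    if "i < n" for i
    using that by (simp add: expect_cond_dev_sq expect2_swap_sandwich)
  ultimately show ?thesis
    unfolding rhoK_def by (simp add: sum_subtractf right_diff_distrib)
qed

end
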